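(* In the model of the context, fix a time $t$ and suppose $\rho_\varepsilon(t,\cdot)$ is smooth with $|\rho_e(t,r)|<1$ for all $r$. Then $j_\varepsilon(t,\cdot)\equiv0$ if and only if both standard potentials $\Omega_E^1(t,\cdot)$ and $\Omega_E^2(t,\cdot)$ are constant in $r$. In that case, for any reference point $r_0\in\mathbb{R}$ and all $r\in\mathbb{R}$, $$\Omega_e^1(t,r)=\Omega_e^1(t,r_0)\,\overline{\Delta}(r),\qquad \Omega_e^2(t,r)=\big(\Omega_e^2(t,r_0)-\overline{B}(r)\,\Omega_e^1(t,r_0)\big)\,\overline{\Delta}(r),$$ where $\overline{B}(r)=(B(r)-B(r_0))/B_d$ and $\overline{\Delta}(r)=\Delta(r)/\Delta(r_0)$; the corresponding densities are given by $\rho_{e,i}=-\Omega_e^i\tanh(|\Omega_e|)/|\Omega_e|$ (and $\rho_e=0$ where $\Omega_e=0$), and such a state is stationary ($\partial_t\rho_\varepsilon=0$). In particular, if $\Delta$ is constant then $\Omega_e^1$ is constant in $r$.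
   Context: Model setup. Fix constants $\mu>0$, $B_d>0$, $\Gamma>0$, and smooth functions $B:\mathbb{R}\to\mathbb{R}$ (external field) and $\Delta:\mathbb{R}\to(0,\infty)$ (spin density). The state is given by smooth standard components $\rho_\varepsilon(t,r)=(\rho_{\varepsilon,1},\rho_{\varepsilon,2})$. Polarization-basis components are $\rho_e=P(r)\rho_\varepsilon$ with $P(r)=\frac{1}{\mu\Delta(r)}\begin{pmatrix}1/B_d & B(r)/B_d\\ 0&1\end{pmatrix}$. With $\sigma(p)=\tfrac12\ln4+\tfrac12(p-1)\ln(1-p)-\tfrac12(p+1)\ln(1+p)$ on $[0,1)$, the entropy density is $s=\sigma(|\rho_e|)$ (Euclidean norm) on $|\rho_e|<1$. Standard potentials: $\Omega_E^i=\partial s/\partial\rho_{\varepsilon,i}$; polarization potentials: $\Omega_e^i=\partial s/\partial\rho_{e,i}$ (so $\Omega_E=P^T\Omega_e$). With $H_\varepsilon$ the negative definite Hessian of $s$ with respect to $\rho_\varepsilon$, the current is $j_\varepsilon=-\Gamma H_\varepsilon^{-1}\partial_r\Omega_E$ and the dynamics are $\partial_t\rho_\varepsilon=-\partial_r j_\varepsilon$. *)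

theory Defs
  imports "HOL-Analysis.Analysis"
begin

definition smooth_fun :: "(real \<Rightarrow> real) \<Rightarrow> bool" where
  "smooth_fun f \<longleftrightarrow> (\<forall>n x. ((deriv ^^ n) f) differentiable (at x))"

definition partial :: "(real^2 \<Rightarrow> real) \<Rightarrow> real^2 \<Rightarrow> 2 \<Rightarrow> real" where
  "partial f x i = deriv (\<lambda>h. f (x + h *\<^sub>R axis i 1)) 0"

text \<open>Change of basis matrix P(r) from standard to polarization components.\<close>
definition Pmat :: "real \<Rightarrow> real \<Rightarrow> (real \<Rightarrow> real) \<Rightarrow> (real \<Rightarrow> real) \<Rightarrow> real \<Rightarrow> real^2^2" where
  "Pmat mu Bd B Delta r = (\<chi> i k. (if i = 1 then (if k = 1 then 1 / Bd else B r / Bd)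
                                     else (if k = 1 then 0 else 1)) / (mu * Delta r))"

definition sigma :: "real \<Rightarrow> real" where
  "sigma p = ln 4 / 2 + (p - 1) * ln (1 - p) / 2 - (p + 1) * ln (1 + p) / 2"

definition ent_e :: "real^2 \<Rightarrow> real" where
  "ent_e y = sigma (norm y)"

definition ent_eps :: "real \<Rightarrow> real \<Rightarrow> (real \<Rightarrow> real) \<Rightarrow> (real \<Rightarrow> real) \<Rightarrow> real \<Rightarrow> real^2 \<Rightarrow> real" where
  "ent_eps mu Bd B Delta r x = ent_e (Pmat mu Bd B Delta r *v x)"

definition OmegaE :: "real \<Rightarrow> real \<Rightarrow> (real \<Rightarrow> real) \<Rightarrow> (real \<Rightarrow> real) \<Rightarrow> real \<Rightarrow> real^2 \<Rightarrow> real^2" where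
  "OmegaE mu Bd B Delta r x = (\<chi> i. partial (ent_eps mu Bd B Delta r) x i)"

definition Omegae :: "real^2 \<Rightarrow> real^2" where
  "Omegae y = (\<chi> i. partial ent_e y i)"

definition Heps :: "real \<Rightarrow> real \<Rightarrow> (real \<Rightarrow> real) \<Rightarrow> (real \<Rightarrow> real) \<Rightarrow> real \<Rightarrow> real^2 \<Rightarrow> real^2^2" where
  "Heps mu Bd B Delta r x = (\<chi> i k. partial (\<lambda>z. partial (ent_eps mu Bd B Delta r) z i) x k)"

definition current :: "real \<Rightarrow> real \<Rightarrow> real \<Rightarrow> (real \<Rightarrow> real) \<Rightarrow> (real \<Rightarrow> real)
    \<Rightarrow> (real \<Rightarrow> real^2) \<Rightarrow> real \<Rightarrow> real^2" where
  "current Gam mu Bd B Delta rho r =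
     - Gam *\<^sub>R (matrix_inv (Heps mu Bd B Delta r (rho r))
        *v (\<chi> i. deriv (\<lambda>s. OmegaE mu Bd B Delta s (rho s) $ i) r))"

end

theory Submission
  imports Defs
begin

text \<open>
  The entropy \<open>\<sigma>(|y|)\<close> has gradient \<open>\<Omega>\<^sub>e(y) = -artanh |y| \<cdot> y / |y|\<close>, whose derivative is
  injective on the open unit ball (it is \<open>-artanh |y| / |y|\<close> times the identity on \<open>y\<^sup>\<bottom>\<close> and
  \<open>-1/(1 - |y|\<^sup>2)\<close> in direction \<open>y\<close>). Since \<open>\<Omega>\<^sub>E = P\<^sup>T \<Omega>\<^sub>e(P \<rho>\<^sub>\<epsilon>)\<close> with \<open>P\<close> invertible, the Hessian
  \<open>H\<^sub>\<epsilon>\<close> is invertible, so the current vanishes exactly where \<open>\<partial>\<^sub>r \<Omega>\<^sub>E = 0\<close>, i.e. everywhere iff \<open>\<Omega>\<^sub>E\<close>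
  is constant. Solving \<open>\<Omega>\<^sub>E = P\<^sup>T \<Omega>\<^sub>e\<close> for \<open>\<Omega>\<^sub>e\<close> with the explicit triangular \<open>P\<close> gives the profiles,
  and inverting \<open>|\<Omega>\<^sub>e| = artanh |\<rho>\<^sub>e|\<close> by \<open>tanh\<close> gives the densities.
\<close>

lemma sigma_has_real_derivative:
  assumes "-1 < p" "p < 1"
  shows "(sigma has_real_derivative (- artanh p)) (at p)"
proof -
  have D: "(sigma has_real_derivative ((ln (1 - p) + (p - 1) * (-1 / (1 - p))) / 2
          - (ln (1 + p) + (p + 1) * (1 / (1 + p))) / 2)) (at p)"
    unfolding sigma_def[abs_def] using assms
    by (auto intro!: derivative_eq_intros) (simp_all add: divide_simps, simp add: algebra_simps)
  have "(p - 1) / (1 - p) = -1" "(p + 1) / (1 + p) = 1"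
    using assms by (auto simp: divide_simps)
  then have "(ln (1 - p) + (p - 1) * (-1 / (1 - p))) / 2
          - (ln (1 + p) + (p + 1) * (1 / (1 + p))) / 2 = - artanh p"
    using assms by (simp add: artanh_def ln_div field_simps)
  with D show ?thesis by simp
qed

lemma tanh_artanh_real:
  assumes "-1 < p" "p < 1"
  shows "tanh (artanh p) = (p::real)"
proof -
  have "exp (- 2 * artanh p) = (1 - p) / (1 + p)"
  proof -
    have "- 2 * artanh p = - ln ((1 + p) / (1 - p))" by (simp add: artanh_def)
    then show ?thesis using assms by (simp add: exp_minus)
  qed
  then have "tanh (artanh p) = (1 - (1-p)/(1+p)) / (1 + (1-p)/(1+p))"
    by (simp only: tanh_real_altdef)
  also have "\<dots> = p" using assms by (simp add: divide_simps)
  finally show ?thesis .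
qed

lemma artanh_real_pos: "0 < p \<Longrightarrow> p < 1 \<Longrightarrow> artanh (p::real) > 0"
  by (simp add: artanh_def)

lemma tendsto_artanh_over_id: "((\<lambda>p::real. artanh p / p) \<longlongrightarrow> 1) (at 0)"
  using artanh_real_has_field_derivative[of 0 UNIV] by (simp add: DERIV_def)

lemma filterlim_norm_at_0: "filterlim norm (at 0) (at (0::'a::real_normed_vector))"
  unfolding filterlim_at by (auto simp: eventually_at_filter intro: tendsto_norm_zero tendsto_ident_at)

definition ent_grad :: "'a::real_inner \<Rightarrow> 'a" where
  "ent_grad y = - ((artanh (norm y) / norm y) *\<^sub>R y)"

definition ent_grad_deriv :: "'a::real_inner \<Rightarrow> 'a \<Rightarrow> 'a" where
  "ent_grad_deriv y h = (if y = 0 then - h else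
     - ((artanh (norm y) / norm y) *\<^sub>R h +
        (((h \<bullet> sgn y) * (1 / (1 - (norm y)\<^sup>2)) * norm y - artanh (norm y) * (h \<bullet> sgn y))
          / (norm y * norm y)) *\<^sub>R y))"

lemma sigma_norm_has_derivative:
  fixes y :: "'a::real_inner"
  assumes "norm y < 1"
  shows "((\<lambda>x. sigma (norm x)) has_derivative (\<lambda>h. ent_grad y \<bullet> h)) (at y)"
proof (cases "y = 0")
  case False
  have S: "(sigma has_real_derivative (- artanh (norm y))) (at (norm y))"
    using assms norm_ge_zero[of y] by (intro sigma_has_real_derivative) linarith+
  have "((\<lambda>x. sigma (norm x)) has_derivative (\<lambda>h. h \<bullet> sgn y * (- artanh (norm y)))) (at y)"
    using DERIV_compose_FDERIV[OF S has_derivative_norm[OF False]] .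
  moreover have "(\<lambda>h. h \<bullet> sgn y * (- artanh (norm y))) = (\<lambda>h. ent_grad y \<bullet> h)"
    using False by (auto simp: ent_grad_def sgn_div_norm inner_commute field_simps)
  ultimately show ?thesis by simp
next
  case True
  have "((\<lambda>q. (sigma (0 + q) - sigma 0) / q) \<longlongrightarrow> 0) (at 0)"
    using sigma_has_real_derivative[of 0] by (simp add: DERIV_def)
  from filterlim_compose[OF this filterlim_norm_at_0]
  have "((\<lambda>h. \<bar>(sigma (0 + norm h) - sigma 0) / norm h\<bar>) \<longlongrightarrow> 0) (at (0::'a))"
    using tendsto_rabs_zero by blast
  then have "((\<lambda>h. norm (sigma (norm (0 + h)) - sigma (norm 0) - ent_grad 0 \<bullet> h) / norm h)
      \<longlongrightarrow> 0) (at (0::'a))"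
    by (simp add: ent_grad_def)
  moreover have "bounded_linear (\<lambda>h. ent_grad y \<bullet> h)"
    by (simp add: bounded_linear_inner_right)
  ultimately show ?thesis using True by (simp add: has_derivative_at)
qed

lemma ent_grad_has_derivative:
  fixes y :: "'a::real_inner"
  assumes "norm y < 1"
  shows "(ent_grad has_derivative ent_grad_deriv y) (at y)"
proof (cases "y = 0")
  case False
  let ?p = "norm y"
  have N: "(norm has_derivative (\<lambda>h. h \<bullet> sgn y)) (at y)"
    using has_derivative_norm[OF False] .
  have "(artanh has_real_derivative (1 / (1 - ?p\<^sup>2))) (at ?p)"
    using assms norm_ge_zero[of y] by (intro artanh_real_has_field_derivative) auto
  from DERIV_compose_FDERIV[OF this N]
  have "((\<lambda>x. artanh (norm x) / norm x) has_derivative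
      (\<lambda>h. ((h \<bullet> sgn y * (1 / (1 - ?p\<^sup>2))) * ?p - artanh ?p * (h \<bullet> sgn y)) / (?p * ?p))) (at y)"
    using has_derivative_divide' N False by fastforce
  from has_derivative_minus[OF has_derivative_scaleR[OF this has_derivative_ident]]
  show ?thesis using False unfolding ent_grad_def[abs_def] ent_grad_deriv_def by simp
next
  case True
  have "((\<lambda>h. 1 - artanh (norm h) / norm h) \<longlongrightarrow> 1 - 1) (at (0::'a))"
    using filterlim_compose[OF tendsto_artanh_over_id filterlim_norm_at_0]
    by (intro tendsto_diff tendsto_const)
  from tendsto_rabs[OF this]
  have "((\<lambda>h. \<bar>1 - artanh (norm h) / norm h\<bar>) \<longlongrightarrow> 0) (at (0::'a))"
    by simp
  moreover have "\<forall>\<^sub>F h in at (0::'a). \<bar>1 - artanh (norm h) / norm h\<bar>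
      = norm (ent_grad (0 + h) - ent_grad 0 - ent_grad_deriv 0 h) / norm h"
  proof (rule eventually_at_filter[THEN iffD2], intro always_eventually allI impI)
    fix h :: 'a assume "h \<noteq> 0"
    have "ent_grad (0 + h) - ent_grad 0 - ent_grad_deriv 0 h = (1 - artanh (norm h) / norm h) *\<^sub>R h"
      by (simp add: ent_grad_def ent_grad_deriv_def algebra_simps)
    with \<open>h \<noteq> 0\<close> show "\<bar>1 - artanh (norm h) / norm h\<bar>
        = norm (ent_grad (0 + h) - ent_grad 0 - ent_grad_deriv 0 h) / norm h"
      by simp
  qed
  ultimately have "((\<lambda>h. norm (ent_grad (0 + h) - ent_grad 0 - ent_grad_deriv 0 h) / norm h)
      \<longlongrightarrow> 0) (at (0::'a))"
    by (rule Lim_transform_eventually)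
  moreover have "ent_grad_deriv (0::'a) = (\<lambda>h. - h)"
    by (simp add: ent_grad_deriv_def fun_eq_iff)
  then have "bounded_linear (ent_grad_deriv (0::'a))"
    using bounded_linear_minus[OF bounded_linear_ident] by simp
  ultimately show ?thesis using True by (simp add: has_derivative_at)
qed

text \<open>Pairing with \<open>y\<close> isolates the radial component of \<open>h\<close>, which must vanish; what remains is a
  nonzero multiple of \<open>h\<close>.\<close>
lemma ent_grad_deriv_eq_0D:
  fixes y :: "'a::real_inner"
  assumes "norm y < 1" "ent_grad_deriv y h = 0"
  shows "h = 0"
proof (cases "y = 0")
  case True then show ?thesis using assms by (simp add: ent_grad_deriv_def)
next
  case False
  let ?p = "norm y" and ?s = "h \<bullet> sgn y" and ?a = "artanh (norm y)"
  have p: "0 < ?p" "?p < 1" using False assms by auto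
  have a: "?a > 0" using artanh_real_pos p by blast
  have q: "1 - ?p\<^sup>2 > 0" using p by (simp add: power_less_one_iff abs_square_less_1)
  have yh: "y \<bullet> h = ?s * ?p" using False by (simp add: sgn_div_norm inner_commute)
  have yy: "y \<bullet> y = ?p * ?p" by (simp add: power2_eq_square[symmetric] dot_square_norm)
  have "y \<bullet> ent_grad_deriv y h = - (?a / ?p * (y \<bullet> h) +
        ((?s * (1 / (1 - ?p\<^sup>2)) * ?p - ?a * ?s) / (?p * ?p)) * (y \<bullet> y))"
    using False by (simp add: ent_grad_deriv_def inner_add_right inner_diff_right inner_minus_right)
  also have "\<dots> = - (?s * ?p / (1 - ?p\<^sup>2))"
    unfolding yh yy using p q by (simp add: field_simps power2_eq_square)
  finally have "?s = 0" using assms q p by simp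
  then have "ent_grad_deriv y h = - ((?a / ?p) *\<^sub>R h)" using False by (simp add: ent_grad_deriv_def)
  then show ?thesis using assms a p by simp
qed

lemma ent_grad_inverse:
  fixes y :: "'a::real_inner"
  assumes "norm y < 1"
  shows "if ent_grad y = 0 then y = 0
         else y = - (tanh (norm (ent_grad y)) / norm (ent_grad y)) *\<^sub>R ent_grad y"
proof (cases "y = 0")
  case True then show ?thesis by (simp add: ent_grad_def)
next
  case False
  let ?p = "norm y" let ?a = "artanh ?p"
  have p: "0 < ?p" "?p < 1" using False assms by auto
  have a: "?a > 0" using artanh_real_pos p by blast
  have w: "ent_grad y = - ((?a / ?p) *\<^sub>R y)" by (simp add: ent_grad_def)
  have nw: "norm (ent_grad y) = ?a" unfolding w using p a by simp
  have t: "tanh ?a = ?p" using p by (intro tanh_artanh_real) linarith+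
  have "ent_grad y \<noteq> 0" using nw a by auto
  moreover have "y = - (tanh (norm (ent_grad y)) / norm (ent_grad y)) *\<^sub>R ent_grad y"
    unfolding nw t unfolding w using p a by simp
  ultimately show ?thesis by simp
qed

lemma has_derivative_imp_partial:
  assumes "(f has_derivative f') (at x)"
  shows "partial f x i = f' (axis i 1)"
proof -
  let ?v = "axis i 1 :: real^2"
  have "((\<lambda>h::real. x + h *\<^sub>R ?v) has_derivative (\<lambda>h. h *\<^sub>R ?v)) (at 0)"
    by (auto intro!: derivative_eq_intros)
  from has_derivative_compose[OF this] assms
  have "((\<lambda>h. f (x + h *\<^sub>R ?v)) has_derivative (\<lambda>h. f' (h *\<^sub>R ?v))) (at 0)"
    by simp
  moreover have "(\<lambda>h. f' (h *\<^sub>R ?v)) = (*) (f' ?v)"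
    using has_derivative_bounded_linear[OF assms] by (auto simp: fun_eq_iff linear_simps)
  ultimately have "((\<lambda>h. f (x + h *\<^sub>R ?v)) has_real_derivative (f' ?v)) (at 0)"
    by (simp add: has_field_derivative_def)
  then show ?thesis unfolding partial_def by (rule DERIV_imp_deriv)
qed

lemma Omegae_eq_ent_grad: "norm y < 1 \<Longrightarrow> Omegae y = ent_grad y"
  unfolding Omegae_def ent_e_def vec_eq_iff
  by (auto simp: has_derivative_imp_partial[OF sigma_norm_has_derivative] inner_axis)

lemma Pmat_mult_vec_nth:
  "(Pmat mu Bd B Delta r *v x) $ 1 = (x$1 + B r * x$2) / (Bd * (mu * Delta r))"
  "(Pmat mu Bd B Delta r *v x) $ 2 = x$2 / (mu * Delta r)"
  by (simp_all add: matrix_vector_mult_def sum_2 Pmat_def add_divide_distrib)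

lemma transpose_Pmat_mult_vec_nth:
  "(transpose (Pmat mu Bd B Delta r) *v w) $ 1 = w$1 / (Bd * (mu * Delta r))"
  "(transpose (Pmat mu Bd B Delta r) *v w) $ 2 = (B r * w$1 / Bd + w$2) / (mu * Delta r)"
  by (simp_all add: matrix_vector_mult_def sum_2 Pmat_def transpose_def add_divide_distrib)

lemma vec2_eq_0_iff: "(w::'a::zero^2) = 0 \<longleftrightarrow> w$1 = 0 \<and> w$2 = 0"
  by (auto simp: vec_eq_iff forall_2)

lemma Pmat_mult_vec_eq_0D:
  assumes "mu > 0" "Bd > 0" "Delta r > 0" "Pmat mu Bd B Delta r *v h = 0"
  shows "h = 0"
  using assms unfolding vec2_eq_0_iff Pmat_mult_vec_nth by (auto simp: field_simps)

lemma transpose_Pmat_mult_vec_eq_0D: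
  assumes "mu > 0" "Bd > 0" "Delta r > 0" "transpose (Pmat mu Bd B Delta r) *v h = 0"
  shows "h = 0"
  using assms unfolding vec2_eq_0_iff transpose_Pmat_mult_vec_nth by (auto simp: field_simps)

lemma ent_eps_has_derivative:
  assumes "norm (Pmat mu Bd B Delta r *v x) < 1"
  shows "(ent_eps mu Bd B Delta r has_derivative
      (\<lambda>h. (transpose (Pmat mu Bd B Delta r) *v ent_grad (Pmat mu Bd B Delta r *v x)) \<bullet> h)) (at x)"
proof -
  let ?P = "Pmat mu Bd B Delta r"
  have "((\<lambda>x. sigma (norm (?P *v x))) has_derivative (\<lambda>h. ent_grad (?P *v x) \<bullet> (?P *v h))) (at x)"
    using has_derivative_compose[OF bounded_linear.has_derivative[OF
        matrix_vector_mul_bounded_linear[of ?P] has_derivative_ident] sigma_norm_has_derivative[OF assms]]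
    by simp
  then show ?thesis
    unfolding ent_eps_def[abs_def] ent_e_def by (simp add: dot_lmul_matrix[symmetric])
qed

lemma OmegaE_eq_transpose_Pmat_ent_grad:
  assumes "norm (Pmat mu Bd B Delta r *v x) < 1"
  shows "OmegaE mu Bd B Delta r x = transpose (Pmat mu Bd B Delta r) *v ent_grad (Pmat mu Bd B Delta r *v x)"
  unfolding OmegaE_def vec_eq_iff
  by (auto simp: has_derivative_imp_partial[OF ent_eps_has_derivative[OF assms]] inner_axis)

text \<open>The Hessian is the matrix of the derivative of \<open>x \<mapsto> P\<^sup>T \<Omega>\<^sub>e(P x)\<close>, which agrees with \<open>\<Omega>\<^sub>E\<close> on
  the open set where \<open>|P x| < 1\<close>; this derivative is a composite of injective maps.\<close>
lemma Heps_invertible: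
  assumes mu: "mu > 0" and Bd: "Bd > 0" and D: "Delta r > 0"
    and x: "norm (Pmat mu Bd B Delta r *v x) < 1"
  shows "invertible (Heps mu Bd B Delta r x)"
proof -
  let ?P = "Pmat mu Bd B Delta r"
  define L where "L = (\<lambda>h. transpose ?P *v ent_grad_deriv (?P *v x) (?P *v h))"
  have "((\<lambda>x. ent_grad (?P *v x)) has_derivative (\<lambda>h. ent_grad_deriv (?P *v x) (?P *v h))) (at x)"
    using has_derivative_compose[OF bounded_linear.has_derivative[OF
        matrix_vector_mul_bounded_linear[of ?P] has_derivative_ident] ent_grad_has_derivative[OF x]]
    by simp
  from bounded_linear.has_derivative[OF matrix_vector_mul_bounded_linear[of "transpose ?P"] this]
  have dL: "((\<lambda>x. transpose ?P *v ent_grad (?P *v x)) has_derivative L) (at x)"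
    unfolding L_def .
  define U where "U = {z. norm (?P *v z) < 1}"
  have U: "open U" unfolding U_def
    by (intro open_Collect_less continuous_intros linear_continuous_on matrix_vector_mul_bounded_linear)
  have "Heps mu Bd B Delta r x $ i $ k = L (axis k 1) $ i" for i k
  proof -
    have "(partial (ent_eps mu Bd B Delta r) z i = (transpose ?P *v ent_grad (?P *v z)) $ i)" if "z \<in> U" for z
      using OmegaE_eq_transpose_Pmat_ent_grad[of mu Bd B Delta r z] that
      unfolding U_def OmegaE_def by (simp add: vec_eq_iff)
    with has_derivative_transform_within_open[OF bounded_linear.has_derivative[OF
        bounded_linear_vec_nth[of i] dL] U] x
    have "((\<lambda>z. partial (ent_eps mu Bd B Delta r) z i) has_derivative (\<lambda>h. L h $ i)) (at x)"
      by (simp add: U_def)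
    then show ?thesis unfolding Heps_def by (simp add: has_derivative_imp_partial)
  qed
  then have H: "Heps mu Bd B Delta r x = matrix L"
    by (simp add: vec_eq_iff matrix_def)
  have "h = 0" if "matrix L *v h = 0" for h
  proof -
    have "L h = 0" using that matrix_vector_mul(3)[OF has_derivative_bounded_linear[OF dL]] by metis
    then have "ent_grad_deriv (?P *v x) (?P *v h) = 0"
      unfolding L_def using transpose_Pmat_mult_vec_eq_0D[where Delta = Delta and r = r, OF mu Bd D] by blast
    then have "?P *v h = 0" using ent_grad_deriv_eq_0D[OF x] by blast
    then show "h = 0" using Pmat_mult_vec_eq_0D[where Delta = Delta and r = r, OF mu Bd D] by blast
  qed
  then show ?thesis unfolding H invertible_left_inverse matrix_left_invertible_ker by blast
qed

lemma matrix_inv_mult_vec_eq_0D: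
  fixes A :: "'a::comm_semiring_1^'n^'n"
  assumes "invertible A" "matrix_inv A *v v = 0"
  shows "v = 0"
proof -
  have "A ** matrix_inv A = mat 1 \<and> matrix_inv A ** A = mat 1"
    using assms(1) unfolding invertible_def matrix_inv_def by (rule someI_ex)
  then have "v = A *v (matrix_inv A *v v)"
    by (simp add: matrix_vector_mul_assoc)
  then show ?thesis using assms(2) by simp
qed

lemma deriv_eq_0_iff_constant:
  fixes f :: "real \<Rightarrow> real"
  assumes "\<And>x. f differentiable (at x)"
  shows "(\<forall>x. deriv f x = 0) \<longleftrightarrow> (\<exists>c. \<forall>x. f x = c)"
proof
  assume "\<forall>x. deriv f x = 0"
  then have "\<forall>x. DERIV f x :> 0"
    using assms DERIV_deriv_iff_real_differentiable by metis
  then show "\<exists>c. \<forall>x. f x = c" using DERIV_isconst_all by blast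
next
  assume "\<exists>c. \<forall>x. f x = c"
  then obtain c where "f = (\<lambda>_. c)" by auto
  then show "\<forall>x. deriv f x = 0" by simp
qed

lemma smooth_fun_differentiable: "smooth_fun f \<Longrightarrow> f differentiable (at x)"
  unfolding smooth_fun_def by (metis funpow_0)

locale regular_state =
  fixes mu Bd :: real and B Delta :: "real \<Rightarrow> real" and rho :: "real \<Rightarrow> real^2"
  assumes mu_pos: "mu > 0" and Bd_pos: "Bd > 0" and Delta_pos: "Delta r > 0"
    and B_differentiable: "B differentiable (at r)"
    and Delta_differentiable: "Delta differentiable (at r)"
    and rho_differentiable: "(\<lambda>r. rho r $ i) differentiable (at r)"
    and inside: "norm (Pmat mu Bd B Delta r *v rho r) < 1"
begin

lemma OmegaE_nth:
  "OmegaE mu Bd B Delta r (rho r) $ 1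
     = Omegae (Pmat mu Bd B Delta r *v rho r) $ 1 / (Bd * (mu * Delta r))"
  "OmegaE mu Bd B Delta r (rho r) $ 2
     = (B r * Omegae (Pmat mu Bd B Delta r *v rho r) $ 1 / Bd
        + Omegae (Pmat mu Bd B Delta r *v rho r) $ 2) / (mu * Delta r)"
  using OmegaE_eq_transpose_Pmat_ent_grad[OF inside] Omegae_eq_ent_grad[OF inside]
  by (simp_all add: transpose_Pmat_mult_vec_nth del: transpose_matrix_vector)

lemma Delta_neq_0: "Delta r \<noteq> 0"
  using Delta_pos[of r] by simp

lemma Omegae_nth_differentiable:
  "(\<lambda>s. Omegae (Pmat mu Bd B Delta s *v rho s) $ j) differentiable (at r)"
proof -
  have P_rho: "(\<lambda>s. Pmat mu Bd B Delta s *v rho s) = (\<lambda>s.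
      ((rho s $ 1 + B s * rho s $ 2) / (Bd * (mu * Delta s))) *\<^sub>R axis 1 1
      + (rho s $ 2 / (mu * Delta s)) *\<^sub>R axis 2 1)"
    by (simp add: fun_eq_iff vec_eq_iff forall_2 Pmat_mult_vec_nth axis_def)
  have "(\<lambda>s. Pmat mu Bd B Delta s *v rho s) differentiable (at r)"
    unfolding P_rho using mu_pos Bd_pos Delta_neq_0[of r]
    by (intro differentiable_add differentiable_scaleR differentiable_divide differentiable_mult
        rho_differentiable B_differentiable Delta_differentiable differentiable_const) auto
  then have "(ent_grad \<circ> (\<lambda>s. Pmat mu Bd B Delta s *v rho s)) differentiable (at r)"
    using differentiableI[OF ent_grad_has_derivative[OF inside]] by (rule differentiable_chain_at)
  from differentiable_chain_at[OF this bounded_linear_imp_differentiable[OF bounded_linear_vec_nth]]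
  show ?thesis by (simp add: o_def Omegae_eq_ent_grad[OF inside])
qed

lemma OmegaE_nth_differentiable:
  "(\<lambda>s. OmegaE mu Bd B Delta s (rho s) $ i) differentiable (at r)"
proof -
  have "(\<lambda>s. OmegaE mu Bd B Delta s (rho s) $ 1) differentiable (at r)"
    unfolding OmegaE_nth using mu_pos Bd_pos Delta_neq_0
    by (intro differentiable_divide differentiable_mult differentiable_const
        Delta_differentiable Omegae_nth_differentiable) auto
  moreover have "(\<lambda>s. OmegaE mu Bd B Delta s (rho s) $ 2) differentiable (at r)"
    unfolding OmegaE_nth using mu_pos Bd_pos Delta_neq_0
    by (intro differentiable_add differentiable_divide differentiable_mult differentiable_const
        Delta_differentiable Omegae_nth_differentiable B_differentiable) auto
  ultimately show ?thesis using exhaust_2[of i] by blast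
qed

lemma current_eq_0_iff:
  assumes "Gam \<noteq> 0"
  shows "current Gam mu Bd B Delta rho r = 0
     \<longleftrightarrow> (\<chi> i. deriv (\<lambda>s. OmegaE mu Bd B Delta s (rho s) $ i) r) = 0"
  using matrix_inv_mult_vec_eq_0D[OF Heps_invertible[OF mu_pos Bd_pos Delta_pos inside]] assms
  by (auto simp: current_def)

lemma current_vanishes_iff_OmegaE_const:
  assumes "Gam \<noteq> 0"
  shows "(\<forall>r. current Gam mu Bd B Delta rho r = 0) \<longleftrightarrow>
         (\<exists>c. \<forall>r. OmegaE mu Bd B Delta r (rho r) $ 1 = c) \<and>
         (\<exists>c. \<forall>r. OmegaE mu Bd B Delta r (rho r) $ 2 = c)" (is "_ \<longleftrightarrow> ?const")
proof -
  have "(\<forall>r. current Gam mu Bd B Delta rho r = 0)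
      \<longleftrightarrow> (\<forall>r. (\<chi> i. deriv (\<lambda>s. OmegaE mu Bd B Delta s (rho s) $ i) r) = 0)"
    using current_eq_0_iff[OF assms] by simp
  also have "\<dots> \<longleftrightarrow> (\<forall>r. deriv (\<lambda>s. OmegaE mu Bd B Delta s (rho s) $ 1) r = 0)
                    \<and> (\<forall>r. deriv (\<lambda>s. OmegaE mu Bd B Delta s (rho s) $ 2) r = 0)"
    by (auto simp: vec_eq_iff forall_2)
  also have "\<dots> \<longleftrightarrow> ?const"
    using deriv_eq_0_iff_constant[OF OmegaE_nth_differentiable] by simp
  finally show ?thesis .
qed

lemma Omegae_profile:
  assumes "(\<exists>c. \<forall>r. OmegaE mu Bd B Delta r (rho r) $ 1 = c) \<and>
           (\<exists>c. \<forall>r. OmegaE mu Bd B Delta r (rho r) $ 2 = c)"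
  shows "\<forall>r0 r.
           Omegae (Pmat mu Bd B Delta r *v rho r) $ 1
             = Omegae (Pmat mu Bd B Delta r0 *v rho r0) $ 1 * (Delta r / Delta r0)
         \<and> Omegae (Pmat mu Bd B Delta r *v rho r) $ 2
             = (Omegae (Pmat mu Bd B Delta r0 *v rho r0) $ 2
                - ((B r - B r0) / Bd) * Omegae (Pmat mu Bd B Delta r0 *v rho r0) $ 1)
               * (Delta r / Delta r0)"
proof -
  obtain c1 c2 where c: "\<And>r. OmegaE mu Bd B Delta r (rho r) $ 1 = c1"
    "\<And>r. OmegaE mu Bd B Delta r (rho r) $ 2 = c2"
    using assms by blast
  have w1: "Omegae (Pmat mu Bd B Delta s *v rho s) $ 1 = c1 * (Bd * (mu * Delta s))" for s
    using c(1)[of s] mu_pos Bd_pos Delta_neq_0[of s] by (simp add: OmegaE_nth field_simps)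
  have w2: "Omegae (Pmat mu Bd B Delta s *v rho s) $ 2 = (c2 - B s * c1) * (mu * Delta s)" for s
    using c(2)[of s] mu_pos Bd_pos Delta_neq_0[of s] by (simp add: OmegaE_nth w1 field_simps)
  show ?thesis
    unfolding w1 w2 using Delta_neq_0 Bd_pos by (simp add: field_simps)
qed

lemma Omegae_1_const_if_Delta_const:
  assumes "(\<exists>c. \<forall>r. OmegaE mu Bd B Delta r (rho r) $ 1 = c) \<and>
           (\<exists>c. \<forall>r. OmegaE mu Bd B Delta r (rho r) $ 2 = c)"
    and "\<exists>d. \<forall>r. Delta r = d"
  shows "\<exists>c. \<forall>r. Omegae (Pmat mu Bd B Delta r *v rho r) $ 1 = c"
proof -
  obtain d where "\<And>r. Delta r = d" using assms(2) by blast
  then have "Omegae (Pmat mu Bd B Delta r *v rho r) $ 1 = Omegae (Pmat mu Bd B Delta 0 *v rho 0) $ 1" for r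
    using Omegae_profile[OF assms(1)] Delta_neq_0[of 0] by simp
  then show ?thesis by blast
qed

lemma density_from_Omegae:
  "let y = Pmat mu Bd B Delta r *v rho r; w = Omegae y in
     (if w = 0 then y = 0 else y = - (tanh (norm w) / norm w) *\<^sub>R w)"
  unfolding Let_def Omegae_eq_ent_grad[OF inside] by (rule ent_grad_inverse[OF inside])

end

theorem mainTheorem5:
  fixes mu Bd Gam t :: real
    and B Delta :: "real \<Rightarrow> real"
    and rho :: "real \<Rightarrow> real \<Rightarrow> real^2"
  assumes mu: "mu > 0" and Bd: "Bd > 0" and Gam: "Gam > 0"
    and smB: "smooth_fun B" and smD: "smooth_fun Delta" and Dpos: "\<forall>r. Delta r > 0"
    and smrho: "\<forall>i. smooth_fun (\<lambda>r. rho t r $ i)"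
    and inside: "\<forall>r. norm (Pmat mu Bd B Delta r *v rho t r) < 1"
    and dyn: "\<forall>r. ((\<lambda>s. rho s r) has_vector_derivative
               (\<chi> i. - deriv (\<lambda>r'. current Gam mu Bd B Delta (rho t) r' $ i) r)) (at t)"
  shows "((\<forall>r. current Gam mu Bd B Delta (rho t) r = 0) \<longleftrightarrow>
            ((\<exists>c. \<forall>r. OmegaE mu Bd B Delta r (rho t r) $ 1 = c) \<and>
             (\<exists>c. \<forall>r. OmegaE mu Bd B Delta r (rho t r) $ 2 = c)))
       \<and> ((\<forall>r. current Gam mu Bd B Delta (rho t) r = 0) \<longrightarrow>
            (\<forall>r0 r.
               Omegae (Pmat mu Bd B Delta r *v rho t r) $ 1
                 = Omegae (Pmat mu Bd B Delta r0 *v rho t r0) $ 1 * (Delta r / Delta r0)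
             \<and> Omegae (Pmat mu Bd B Delta r *v rho t r) $ 2
                 = (Omegae (Pmat mu Bd B Delta r0 *v rho t r0) $ 2
                    - ((B r - B r0) / Bd) * Omegae (Pmat mu Bd B Delta r0 *v rho t r0) $ 1)
                   * (Delta r / Delta r0))
          \<and> (\<forall>r. let y = Pmat mu Bd B Delta r *v rho t r; w = Omegae y in
                 (if w = 0 then y = 0 else y = - (tanh (norm w) / norm w) *\<^sub>R w))
          \<and> (\<forall>r. ((\<lambda>s. rho s r) has_vector_derivative 0) (at t))
          \<and> ((\<exists>d. \<forall>r. Delta r = d) \<longrightarrow>
               (\<exists>c. \<forall>r. Omegae (Pmat mu Bd B Delta r *v rho t r) $ 1 = c)))"
proof -
  interpret regular_state mu Bd B Delta "rho t"
    using mu Bd Dpos smB smD smrho inside by unfold_locales (auto intro: smooth_fun_differentiable)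
  have "Gam \<noteq> 0" using Gam by simp
  note vanishing_iff = current_vanishes_iff_OmegaE_const[OF this]
  have stationary: "((\<lambda>s. rho s r) has_vector_derivative 0) (at t)"
    if "\<forall>r. current Gam mu Bd B Delta (rho t) r = 0" for r
    using dyn[rule_format, of r] that by (simp flip: zero_vec_def)
  show ?thesis
    by (intro conjI impI) (use vanishing_iff Omegae_profile Omegae_1_const_if_Delta_const
        density_from_Omegae stationary in blast)+
qed

end
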